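(* The MacMahon function $M(z)=\prod_{j=1}^\infty\frac{1}{(1-z^j)^j}$, $|z|<1$, belongs to $\mathcal{K}$ (with radius of convergence $1$) and is Gaussian.
   Context: The class $\mathcal{K}$ consists of non-constant power series $f(z)=\sum_{n\ge0}a_nz^n$ with radius of convergence $R\in(0,+\infty]$, with $a_n\ge 0$ for all $n$ and $a_0>0$. For $t\in(0,R)$, $X_t$ is the random variable with $\mathbf{P}(X_t=n)=a_nt^n/f(t)$, $n\ge0$. With $m_f(t)=\mathbf{E}(X_t)$, $\sigma_f^2(t)=\mathbf{V}(X_t)>0$ and $\breve{X}_t=(X_t-m_f(t))/\sigma_f(t)$, $f$ is called Gaussian if $\breve{X}_t$ converges in distribution to a standard normal random variable as $t\uparrow R$. *)

theory Defs
  imports "HOL-Probability.Probability"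
begin

definition ps_val :: "(nat \<Rightarrow> real) \<Rightarrow> real \<Rightarrow> real" where
  "ps_val a t = (\<Sum>n. a n * t ^ n)"

definition in_class_K :: "(nat \<Rightarrow> real) \<Rightarrow> bool" where
  "in_class_K a \<longleftrightarrow> (\<forall>n. a n \<ge> 0) \<and> a 0 > 0 \<and> (\<exists>n>0. a n \<noteq> 0)
     \<and> conv_radius a > 0"

text \<open>Mean and variance of X_t, where P(X_t = n) = a_n t^n / f(t).\<close>
definition khin_mean :: "(nat \<Rightarrow> real) \<Rightarrow> real \<Rightarrow> real" where
  "khin_mean a t = (\<Sum>n. real n * (a n * t ^ n / ps_val a t))"

definition khin_var :: "(nat \<Rightarrow> real) \<Rightarrow> real \<Rightarrow> real" where
  "khin_var a t = (\<Sum>n. (real n - khin_mean a t)\<^sup>2 * (a n * t ^ n / ps_val a t))"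

definition khin_norm_cdf :: "(nat \<Rightarrow> real) \<Rightarrow> real \<Rightarrow> real \<Rightarrow> real" where
  "khin_norm_cdf a t x =
     (\<Sum>n. if (real n - khin_mean a t) / sqrt (khin_var a t) \<le> x
           then a n * t ^ n / ps_val a t else 0)"

definition std_normal_cdf :: "real \<Rightarrow> real" where
  "std_normal_cdf x = (LBINT y:{..x}. std_normal_density y)"

definition to_radius :: "(nat \<Rightarrow> real) \<Rightarrow> real filter" where
  "to_radius a = (if conv_radius a = \<infinity> then at_top
                  else at_left (real_of_ereal (conv_radius a)))"

text \<open>Gaussian: the normalized X_t converges in distribution to N(0,1) as t \<up> R.
  Since the normal cdf is continuous everywhere, this is convergence of the
  distribution functions at every point.\<close>
definition gaussian :: "(nat \<Rightarrow> real) \<Rightarrow> bool" where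
  "gaussian a \<longleftrightarrow> in_class_K a \<and>
     (\<forall>x. ((\<lambda>t. khin_norm_cdf a t x) \<longlongrightarrow> std_normal_cdf x) (to_radius a))"

definition macmahon :: "complex \<Rightarrow> complex" where
  "macmahon z = (\<Prod>j. inverse ((1 - z ^ Suc j) ^ Suc j))"

end

theory Submission
  imports Defs "HOL-Complex_Analysis.Complex_Analysis" "HOL-Real_Asymp.Real_Asymp"
begin

text \<open>
  Taking logarithms, \<open>log M(z) = \<Sum>\<^sub>j -j log(1 - z\<^sup>j) = \<Sum>\<^sub>n c\<^sub>n z\<^sup>n\<close> with
  \<open>c\<^sub>n = \<Sum>\<^sub>d\<^sub>|\<^sub>n n/d\<^sup>2\<close>, so \<open>n \<le> c\<^sub>n \<le> 2n\<close>. Hence \<open>M = exp (\<Sum> c\<^sub>n z\<^sup>n)\<close> has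
  coefficients \<open>a\<^sub>n \<ge> c\<^sub>n\<close>, all nonnegative, and radius of convergence 1. The cumulants of
  \<open>X\<^sub>t\<close> are \<open>\<kappa>\<^sub>j(t) = \<Sum> n\<^sup>j c\<^sub>n t\<^sup>n\<close>, and the bounds on \<open>c\<^sub>n\<close> give
  \<open>\<kappa>\<^sub>2(t) \<ge> C (1 - t)\<^sup>-\<^sup>4\<close> and \<open>\<kappa>\<^sub>3(t) \<le> C' (1 - t)\<^sup>-\<^sup>5\<close>, so \<open>\<kappa>\<^sub>3 / \<kappa>\<^sub>2\<^sup>3\<^sup>/\<^sup>2 \<rightarrow> 0\<close>.
  The characteristic function of the normalized variable at \<open>\<theta>\<close> is
  \<open>exp (\<Sum> c\<^sub>n t\<^sup>n (e\<^sup>i\<^sup>n\<^sup>u - 1 - inu))\<close> with \<open>u = \<theta> / \<sigma>\<close>, and the cubic Taylor bound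
  for \<open>e\<^sup>i\<^sup>x\<close> puts its exponent within \<open>|\<theta>|\<^sup>3/6 \<cdot> \<kappa>\<^sub>3 / \<kappa>\<^sub>2\<^sup>3\<^sup>/\<^sup>2\<close> of
  \<open>-\<theta>\<^sup>2/2\<close>. Levy's continuity theorem turns this into convergence of the distribution
  functions.
\<close>

section \<open>Power series with polynomial weights\<close>

lemma binomial_neg_power_sums:
  fixes t :: real
  assumes "\<bar>t\<bar> < 1"
  shows "(\<lambda>n. real ((n + k) choose k) * t ^ n) sums (1 / (1 - t) ^ Suc k)"
proof -
  have "(\<lambda>n. ((- real (Suc k)) gchoose n) * (- t) ^ n) sums (1 + - t) powr (- real (Suc k))"
    using gen_binomial_real[of "- t"] assms by simp
  moreover have "((- real (Suc k)) gchoose n) * (- t) ^ n = real ((n + k) choose k) * t ^ n" for n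
  proof -
    have "real (n + k) gchoose n = real ((n + k) choose n)"
      by (rule binomial_gbinomial[symmetric])
    also have "(n + k) choose n = (n + k) choose k"
      using binomial_symmetric[of k "n + k"] by simp
    finally have "((- real (Suc k)) gchoose n) = (-1) ^ n * real ((n + k) choose k)"
      using gbinomial_minus[of "real (Suc k)" n] by (simp add: add_ac)
    then have "((- real (Suc k)) gchoose n) * (- t) ^ n = real ((n + k) choose k) * ((-1) ^ n * (- t) ^ n)"
      by (simp only: mult_ac)
    also have "(-1) ^ n * (- t) ^ n = t ^ n"
      by (simp flip: power_mult_distrib)
    finally show ?thesis .
  qed
  moreover have "(1 + - t) powr (- real (Suc k)) = 1 / (1 - t) ^ Suc k"
    using assms by (simp add: powr_minus divide_inverse powr_realpow del: of_nat_Suc)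
  ultimately show ?thesis by simp
qed

lemma powser_theta_derivative:
  fixes b :: "nat \<Rightarrow> real"
  assumes "\<And>x. \<bar>x\<bar> < r \<Longrightarrow> summable (\<lambda>n. b n * x ^ n)" and "\<bar>t\<bar> < r"
  obtains D where "((\<lambda>x. \<Sum>n. b n * x ^ n) has_real_derivative D) (at t)"
    and "(\<lambda>n. (real n * b n) * t ^ n) sums (t * D)"
proof
  show "((\<lambda>x. \<Sum>n. b n * x ^ n) has_real_derivative (\<Sum>n. diffs b n * t ^ n)) (at t)"
    using termdiffs_strong'[of r b t] assms by simp
  have "summable (\<lambda>n. diffs b n * t ^ n)"
    using termdiff_converges[of t r b] assms by simp
  then have "(\<lambda>n. t * (diffs b n * t ^ n)) sums (t * (\<Sum>n. diffs b n * t ^ n))"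
    by (intro sums_mult summable_sums)
  then have "(\<lambda>n. (real (Suc n) * b (Suc n)) * t ^ Suc n) sums (t * (\<Sum>n. diffs b n * t ^ n))"
    by (simp add: diffs_def algebra_simps)
  then show "(\<lambda>n. (real n * b n) * t ^ n) sums (t * (\<Sum>n. diffs b n * t ^ n))"
    by (subst (asm) sums_Suc_iff) simp
qed

lemma summable_of_nat_mult_powser:
  fixes b :: "nat \<Rightarrow> real"
  assumes "\<And>x. \<bar>x\<bar> < r \<Longrightarrow> summable (\<lambda>n. b n * x ^ n)" and "\<bar>t\<bar> < r"
  shows "summable (\<lambda>n. (real n * b n) * t ^ n)"
proof -
  obtain D where "(\<lambda>n. (real n * b n) * t ^ n) sums (t * D)"
    using powser_theta_derivative[OF assms] by blast
  then show ?thesis by (rule sums_summable)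
qed

lemma summable_of_nat_power_geometric:
  fixes x :: real
  assumes "\<bar>x\<bar> < 1"
  shows "summable (\<lambda>n. real n ^ j * x ^ n)"
  using assms
proof (induction j arbitrary: x)
  case 0
  then show ?case by (simp add: summable_geometric)
next
  case (Suc j)
  from summable_of_nat_mult_powser[of 1 "\<lambda>n. real n ^ j", OF Suc.IH Suc.prems] show ?case
    by (simp add: algebra_simps)
qed

section \<open>The logarithm of the MacMahon function\<close>

text \<open>Expanding \<open>-(j+1) log(1 - z\<^sup>j\<^sup>+\<^sup>1)\<close> into \<open>\<Sum>\<^sub>k (j+1)/(k+1) z\<^sup>(\<^sup>j\<^sup>+\<^sup>1\<^sup>)\<^sup>(\<^sup>k\<^sup>+\<^sup>1\<^sup>)\<close>
  and collecting the terms with \<open>(j+1)(k+1) = n\<close>, \<open>d = k+1\<close>, gives the coefficient of \<open>z\<^sup>n\<close>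
  in \<open>log M(z)\<close>.\<close>

definition log_macmahon_coeff :: "nat \<Rightarrow> real" where
  "log_macmahon_coeff n = (\<Sum>d | d dvd n \<and> 0 < n. real n / real d ^ 2)"

lemma finite_divisors: "finite {d. d dvd n \<and> 0 < (n::nat)}"
  by (rule finite_subset[of _ "{..n}"]) (auto dest: dvd_imp_le)

lemma log_macmahon_coeff_0 [simp]: "log_macmahon_coeff 0 = 0"
  by (simp add: log_macmahon_coeff_def)

lemma log_macmahon_coeff_nonneg: "0 \<le> log_macmahon_coeff n"
  unfolding log_macmahon_coeff_def by (intro sum_nonneg) auto

lemma log_macmahon_coeff_ge:
  assumes "0 < n"
  shows "real n \<le> log_macmahon_coeff n"
proof -
  have "(\<Sum>d\<in>{1}. real n / real d ^ 2) \<le> log_macmahon_coeff n"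
    unfolding log_macmahon_coeff_def
    by (rule sum_mono2[OF finite_divisors]) (use assms in auto)
  then show ?thesis by simp
qed

lemma sum_inverse_squares_le: "(\<Sum>d=1..n. 1 / real d ^ 2) \<le> 2 - 2 / real (Suc n)"
proof (induction n)
  case (Suc n)
  have "2 / real (Suc n) - 2 / real (Suc (Suc n)) = 2 / (real (Suc n) * real (Suc (Suc n)))"
    by (simp add: field_simps)
  moreover have "1 / real (Suc n) ^ 2 \<le> 2 / (real (Suc n) * real (Suc (Suc n)))"
    by (simp add: divide_simps power2_eq_square)
  ultimately show ?case using Suc by simp
qed simp

lemma log_macmahon_coeff_le: "log_macmahon_coeff n \<le> 2 * real n"
proof -
  have "{d. d dvd n \<and> 0 < n} \<subseteq> {1..n}"
  proof
    fix d assume "d \<in> {d. d dvd n \<and> 0 < n}"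
    then have "d dvd n" "0 < n" by auto
    then show "d \<in> {1..n}" using dvd_imp_le[of d n] by (cases "d = 0") auto
  qed
  then have "log_macmahon_coeff n \<le> (\<Sum>d=1..n. real n / real d ^ 2)"
    unfolding log_macmahon_coeff_def by (intro sum_mono2) auto
  also have "\<dots> = real n * (\<Sum>d=1..n. 1 / real d ^ 2)"
    by (simp add: sum_distrib_left)
  also have "\<dots> \<le> real n * 2"
    using sum_inverse_squares_le[of n] by (intro mult_left_mono) (auto intro: order_trans)
  finally show ?thesis by simp
qed

lemma summable_log_macmahon_coeff_powser:
  fixes x :: real
  assumes "\<bar>x\<bar> < 1"
  shows "summable (\<lambda>n. real n ^ j * log_macmahon_coeff n * x ^ n)"
proof (rule summable_comparison_test)
  show "summable (\<lambda>n. 2 * (real n ^ Suc j * \<bar>x\<bar> ^ n))"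
    using summable_of_nat_power_geometric[of "\<bar>x\<bar>" "Suc j"] assms by simp
  have "norm (real n ^ j * log_macmahon_coeff n * x ^ n) \<le> 2 * (real n ^ Suc j * \<bar>x\<bar> ^ n)" for n
  proof -
    have "norm (real n ^ j * log_macmahon_coeff n * x ^ n) = real n ^ j * log_macmahon_coeff n * \<bar>x\<bar> ^ n"
      using log_macmahon_coeff_nonneg[of n] by (simp add: abs_mult power_abs)
    also have "\<dots> \<le> real n ^ j * (2 * real n) * \<bar>x\<bar> ^ n"
      by (intro mult_right_mono mult_left_mono log_macmahon_coeff_le) auto
    finally show ?thesis by (simp add: algebra_simps)
  qed
  then show "\<exists>N. \<forall>n\<ge>N. norm (real n ^ j * log_macmahon_coeff n * x ^ n) \<le> 2 * (real n ^ Suc j * \<bar>x\<bar> ^ n)"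
    by blast
qed

definition log_macmahon_term :: "complex \<Rightarrow> nat \<times> nat \<Rightarrow> complex" where
  "log_macmahon_term z = (\<lambda>(j, k). of_nat (Suc j) / of_nat (Suc k) * z ^ (Suc j * Suc k))"

definition log_macmahon_factor :: "complex \<Rightarrow> nat \<Rightarrow> complex" where
  "log_macmahon_factor z j = - of_nat (Suc j) * Ln (1 - z ^ Suc j)"

lemma norm_log_macmahon_term_le:
  assumes "norm z < 1"
  shows "norm (log_macmahon_term z (j, k)) \<le> real (Suc j) * norm z ^ Suc j * norm z ^ k"
proof -
  have "Suc j + k \<le> Suc j * Suc k" by simp
  with assms have "norm z ^ (Suc j * Suc k) \<le> norm z ^ (Suc j + k)"
    by (intro power_decreasing) simp_all
  have "norm (log_macmahon_term z (j, k)) = real (Suc j) / real (Suc k) * norm z ^ (Suc j * Suc k)"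
    by (simp only: log_macmahon_term_def case_prod_conv norm_mult norm_divide norm_of_nat norm_power)
  also have "\<dots> \<le> real (Suc j) * norm z ^ (Suc j + k)"
  proof (rule mult_mono)
    show "real (Suc j) / real (Suc k) \<le> real (Suc j)"
      using divide_left_mono[of 1 "real (Suc k)" "real (Suc j)"] by simp
  qed (use \<open>norm z ^ (Suc j * Suc k) \<le> norm z ^ (Suc j + k)\<close> in auto)
  finally show ?thesis by (simp add: power_add mult.assoc)
qed

lemma log_macmahon_term_abs_summable:
  assumes "norm z < 1"
  shows "(\<lambda>x. norm (log_macmahon_term z x)) summable_on UNIV"
proof -
  let ?r = "norm z"
  define h where "h = (\<lambda>(j, k). real (Suc j) * ?r ^ Suc j * ?r ^ k)"
  have inner: "((\<lambda>k. h (j, k)) has_sum (real (Suc j) * ?r ^ Suc j * (1 / (1 - ?r)))) UNIV" for j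
  proof -
    have "(\<lambda>k. real (Suc j) * ?r ^ Suc j * ?r ^ k) sums (real (Suc j) * ?r ^ Suc j * (1 / (1 - ?r)))"
      using assms by (intro sums_mult geometric_sums) simp
    then show ?thesis by (intro sums_nonneg_imp_has_sum) (simp_all add: h_def)
  qed
  have "summable (\<lambda>j. real j ^ 1 * ?r ^ j)"
    using assms by (intro summable_of_nat_power_geometric) simp
  then have "summable (\<lambda>j. real (Suc j) * ?r ^ Suc j * (1 / (1 - ?r)))"
    by (subst summable_Suc_iff) (simp add: summable_divide)
  then have outer: "(\<lambda>j. real (Suc j) * ?r ^ Suc j * (1 / (1 - ?r))) summable_on UNIV"
    using assms by (intro summable_nonneg_imp_summable_on) auto
  have "h summable_on Sigma UNIV (\<lambda>_. UNIV)"
    by (rule summable_on_SigmaI[OF inner outer]) (auto simp: h_def)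
  then have "h summable_on UNIV" by simp
  then show ?thesis
  proof (rule Infinite_Sum.abs_summable_on_comparison_test')
    fix x :: "nat \<times> nat"
    show "norm (log_macmahon_term z x) \<le> h x"
      by (cases x) (simp only: h_def case_prod_conv norm_log_macmahon_term_le[OF assms])
  qed
qed

lemma log_macmahon_term_has_sum:
  assumes "norm z < 1"
  shows "((\<lambda>k. log_macmahon_term z (j, k)) has_sum log_macmahon_factor z j) UNIV"
proof (rule norm_summable_imp_has_sum)
  show "summable (\<lambda>k. norm (log_macmahon_term z (j, k)))"
  proof (rule summable_comparison_test)
    show "summable (\<lambda>k. real (Suc j) * norm z ^ Suc j * norm z ^ k)"
      using assms by (intro summable_mult summable_geometric) simp
  qed (use norm_log_macmahon_term_le[OF assms] in auto)
  let ?w = "z ^ Suc j"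
  have "norm z ^ Suc j < 1"
    using assms by (subst power_less_one_iff) auto
  then have "norm ?w < 1" by (simp only: norm_power)
  then have "(\<lambda>k. ?w ^ k / of_nat k) sums - Ln (1 - ?w)"
    using sums_minus[OF Ln_series[of "- ?w"]] by (simp add: power_minus')
  then have "(\<lambda>k. ?w ^ Suc k / of_nat (Suc k)) sums - Ln (1 - ?w)"
    by (subst sums_Suc_iff) simp
  then have "(\<lambda>k. of_nat (Suc j) * (?w ^ Suc k / of_nat (Suc k))) sums (of_nat (Suc j) * - Ln (1 - ?w))"
    by (rule sums_mult)
  also have "of_nat (Suc j) * - Ln (1 - ?w) = log_macmahon_factor z j"
    by (simp only: log_macmahon_factor_def mult_minus_left mult_minus_right)
  moreover have "of_nat (Suc j) * (?w ^ Suc k / of_nat (Suc k)) = log_macmahon_term z (j, k)" for k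
    by (simp only: log_macmahon_term_def case_prod_conv power_mult times_divide_eq_right
        divide_inverse mult_ac)
  ultimately show "(\<lambda>k. log_macmahon_term z (j, k)) sums log_macmahon_factor z j"
    by simp
qed

lemma bij_betw_divisor_pairs:
  "bij_betw (\<lambda>(j, k). (Suc j * Suc k, Suc k)) UNIV (SIGMA n:UNIV. {d. d dvd n \<and> 0 < n})"
proof -
  define g :: "nat \<times> nat \<Rightarrow> nat \<times> nat" where "g = (\<lambda>(n, d). (n div d - 1, d - 1))"
  have "g ((\<lambda>(j, k). (Suc j * Suc k, Suc k)) p) = p" for p
  proof -
    obtain j k where p: "p = (j, k)" by fastforce
    have "Suc j * Suc k div Suc k = Suc j" by (rule div_mult_self_is_m) simp
    then show ?thesis by (simp only: p g_def case_prod_conv) simp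
  qed
  moreover have "(\<lambda>(j, k). (Suc j * Suc k, Suc k)) (g p) = p"
    if "p \<in> (SIGMA n:UNIV. {d. d dvd n \<and> 0 < n})" for p
  proof -
    from that obtain n d where p: "p = (n, d)" "d dvd n" "0 < n" by auto
    from \<open>d dvd n\<close> obtain m where "n = d * m" by (rule dvdE)
    with \<open>0 < n\<close> have "Suc (n div d - 1) = m" "Suc (d - 1) = d" by auto
    then show ?thesis
      using \<open>n = d * m\<close> by (simp only: p g_def case_prod_conv mult.commute)
  qed
  moreover have "(\<lambda>(j, k). (Suc j * Suc k, Suc k)) ` UNIV \<subseteq> (SIGMA n:UNIV. {d. d dvd n \<and> 0 < n})"
    by (auto simp del: mult_Suc mult_Suc_right)
  ultimately show ?thesis
    by (intro bij_betw_byWitness[of _ g]) auto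
qed

lemma log_macmahon_term_reindex:
  "log_macmahon_term z (j, k) = of_nat (Suc j * Suc k) / of_nat (Suc k) ^ 2 * z ^ (Suc j * Suc k)"
proof -
  have "(of_nat (Suc j * Suc k) :: complex) / of_nat (Suc k) ^ 2 = of_nat (Suc j) / of_nat (Suc k)"
    by (simp only: of_nat_mult power2_eq_square) (simp del: of_nat_Suc)
  then show ?thesis by (simp only: log_macmahon_term_def case_prod_conv)
qed

lemma log_macmahon_double_series:
  assumes z: "norm z < 1"
  shows "log_macmahon_factor z sums (\<Sum>\<^sub>\<infinity>x. log_macmahon_term z x)"
    and "(\<lambda>n. of_real (log_macmahon_coeff n) * z ^ n) sums (\<Sum>\<^sub>\<infinity>x. log_macmahon_term z x)"
proof -
  let ?L = "\<Sum>\<^sub>\<infinity>x. log_macmahon_term z x"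
  have "log_macmahon_term z summable_on UNIV"
    using log_macmahon_term_abs_summable[OF z] by (rule abs_summable_summable)
  then have sum: "(log_macmahon_term z has_sum ?L) UNIV"
    by (simp add: has_sum_iff)
  then have "(log_macmahon_term z has_sum ?L) (UNIV \<times> UNIV)"
    by (simp only: UNIV_Times_UNIV)
  from has_sum_Sigma'[OF this log_macmahon_term_has_sum[OF z]]
  show "log_macmahon_factor z sums ?L" by (rule has_sum_imp_sums)
  let ?f = "\<lambda>(n, d). of_nat n / of_nat d ^ 2 * z ^ n"
  have reindex: "?f ((\<lambda>(j, k). (Suc j * Suc k, Suc k)) x) = log_macmahon_term z x" for x
    by (cases x) (simp only: case_prod_conv log_macmahon_term_reindex)
  have "((\<lambda>x. ?f ((\<lambda>(j, k). (Suc j * Suc k, Suc k)) x)) has_sum ?L) UNIV"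
    unfolding reindex by (rule sum)
  then have "(?f has_sum ?L) (SIGMA n:UNIV. {d. d dvd n \<and> 0 < n})"
    by (simp only: has_sum_reindex_bij_betw[OF bij_betw_divisor_pairs])
  moreover have "((\<lambda>d. ?f (n, d)) has_sum of_real (log_macmahon_coeff n) * z ^ n) {d. d dvd n \<and> 0 < n}" for n
    using has_sum_finite[OF finite_divisors, of "\<lambda>d. ?f (n, d)"]
    by (simp add: log_macmahon_coeff_def sum_distrib_right power2_eq_square)
  ultimately have "((\<lambda>n. of_real (log_macmahon_coeff n) * z ^ n) has_sum ?L) UNIV"
    by (rule has_sum_Sigma')
  then show "(\<lambda>n. of_real (log_macmahon_coeff n) * z ^ n) sums ?L"
    by (rule has_sum_imp_sums)
qed

definition log_macmahon_fps :: "complex fps" where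
  "log_macmahon_fps = Abs_fps (\<lambda>n. of_real (log_macmahon_coeff n))"

definition log_macmahon :: "complex \<Rightarrow> complex" where
  "log_macmahon = eval_fps log_macmahon_fps"

lemma log_macmahon_sums:
  "norm z < 1 \<Longrightarrow> (\<lambda>n. of_real (log_macmahon_coeff n) * z ^ n) sums log_macmahon z"
  using log_macmahon_double_series(2)[of z]
  by (simp add: log_macmahon_def log_macmahon_fps_def eval_fps_def sums_iff)

lemma log_macmahon_factor_sums: "norm z < 1 \<Longrightarrow> log_macmahon_factor z sums log_macmahon z"
  using log_macmahon_double_series[of z] log_macmahon_sums[of z] sums_unique2 by metis

lemma fps_conv_radius_log_macmahon: "1 \<le> fps_conv_radius log_macmahon_fps"
  unfolding fps_conv_radius_def
proof (rule conv_radius_geI_ex')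
  fix r :: real assume "0 < r" "ereal r < 1"
  then have "summable (\<lambda>n. real n ^ 0 * log_macmahon_coeff n * r ^ n)"
    by (intro summable_log_macmahon_coeff_powser) auto
  then have "summable (\<lambda>n. complex_of_real (log_macmahon_coeff n * r ^ n))"
    by (subst summable_of_real_iff) simp
  then show "summable (\<lambda>n. fps_nth log_macmahon_fps n * of_real r ^ n)"
    by (simp add: log_macmahon_fps_def)
qed

lemma exp_log_macmahon_factor:
  assumes "norm z < 1"
  shows "exp (log_macmahon_factor z j) = inverse ((1 - z ^ Suc j) ^ Suc j)"
proof -
  have "norm z ^ Suc j < 1"
    using assms by (subst power_less_one_iff) auto
  then have "norm (z ^ Suc j) < 1" by (simp only: norm_power)
  then have "1 - z ^ Suc j \<noteq> 0" by (metis right_minus_eq norm_one order_less_irrefl)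
  have "exp (log_macmahon_factor z j) = exp (of_nat (Suc j) * - Ln (1 - z ^ Suc j))"
    unfolding log_macmahon_factor_def by (simp only: mult_minus_left mult_minus_right)
  also have "\<dots> = exp (- Ln (1 - z ^ Suc j)) ^ Suc j"
    by (rule exp_of_nat_mult)
  also have "exp (- Ln (1 - z ^ Suc j)) = inverse (1 - z ^ Suc j)"
    using \<open>1 - z ^ Suc j \<noteq> 0\<close> by (simp add: exp_minus)
  finally show ?thesis by (simp add: power_inverse)
qed

lemma macmahon_has_prod:
  assumes "norm z < 1"
  shows "(\<lambda>j. inverse ((1 - z ^ Suc j) ^ Suc j)) has_prod exp (log_macmahon z)"
proof -
  have "raw_has_prod (\<lambda>j. exp (log_macmahon_factor z j)) 0 (exp (log_macmahon z))"
    by (rule sums_imp_has_prod_exp[OF log_macmahon_factor_sums[OF assms]])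
  then show ?thesis
    by (simp add: has_prod_def exp_log_macmahon_factor[OF assms])
qed

lemma macmahon_eq_exp: "norm z < 1 \<Longrightarrow> macmahon z = exp (log_macmahon z)"
  unfolding macmahon_def using macmahon_has_prod has_prod_unique by metis

section \<open>Coefficients of the MacMahon function\<close>

lemma fps_power_nth_nonneg:
  fixes f :: "complex fps"
  assumes "\<And>n. 0 \<le> fps_nth f n"
  shows "0 \<le> fps_nth (f ^ i) n"
proof (induction i arbitrary: n)
  case 0
  then show ?case by (simp add: less_eq_complex_def)
next
  case (Suc i)
  show ?case
    unfolding power_Suc fps_mult_nth by (rule sum_nonneg) (rule mult_nonneg_nonneg[OF assms Suc.IH])
qed

lemma fps_exp_nth_nonneg: "0 \<le> fps_nth (fps_exp (1 :: complex)) n"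
proof -
  have "0 \<le> complex_of_real (1 / fact n)"
    by (simp only: less_eq_complex_def Re_complex_of_real Im_complex_of_real) simp
  also have "\<dots> = fps_nth (fps_exp 1) n"
    by simp
  finally show ?thesis .
qed

lemma fps_exp_compose_nth_nonneg:
  fixes f :: "complex fps"
  assumes "\<And>n. 0 \<le> fps_nth f n"
  shows "0 \<le> fps_nth (fps_exp 1 oo f) n"
  unfolding fps_compose_nth
  by (rule sum_nonneg) (rule mult_nonneg_nonneg[OF fps_exp_nth_nonneg fps_power_nth_nonneg[OF assms]])

lemma fps_exp_compose_nth_ge:
  fixes f :: "complex fps"
  assumes "\<And>n. 0 \<le> fps_nth f n" and "0 < n"
  shows "fps_nth f n \<le> fps_nth (fps_exp 1 oo f) n"
proof -
  have "fps_nth (fps_exp 1) 1 * fps_nth (f ^ 1) n \<le>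
          (\<Sum>i=0..n. fps_nth (fps_exp 1) i * fps_nth (f ^ i) n)"
    by (rule member_le_sum)
       (use assms(2) in \<open>auto simp del: fps_exp_nth
          intro: mult_nonneg_nonneg[OF fps_exp_nth_nonneg fps_power_nth_nonneg[OF assms(1)]]\<close>)
  then show ?thesis by (simp add: fps_compose_nth)
qed

definition macmahon_fps :: "complex fps" where
  "macmahon_fps = fps_exp 1 oo log_macmahon_fps"

definition macmahon_coeff :: "nat \<Rightarrow> real" where
  "macmahon_coeff n = Re (fps_nth macmahon_fps n)"

lemma log_macmahon_fps_nth_nonneg: "0 \<le> fps_nth log_macmahon_fps n"
  by (simp add: log_macmahon_fps_def less_eq_complex_def log_macmahon_coeff_nonneg)

lemma macmahon_fps_nth_nonneg: "0 \<le> fps_nth macmahon_fps n"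
  unfolding macmahon_fps_def by (rule fps_exp_compose_nth_nonneg[OF log_macmahon_fps_nth_nonneg])

lemma macmahon_fps_nth: "fps_nth macmahon_fps n = of_real (macmahon_coeff n)"
  using macmahon_fps_nth_nonneg[of n]
  by (simp add: macmahon_coeff_def less_eq_complex_def complex_eq_iff)

lemma macmahon_coeff_nonneg: "0 \<le> macmahon_coeff n"
  using macmahon_fps_nth_nonneg[of n] by (simp add: macmahon_coeff_def less_eq_complex_def)

lemma macmahon_coeff_0: "macmahon_coeff 0 = 1"
  by (simp add: macmahon_coeff_def macmahon_fps_def)

lemma macmahon_coeff_ge_1:
  assumes "0 < n"
  shows "1 \<le> macmahon_coeff n"
proof -
  have "fps_nth log_macmahon_fps n \<le> fps_nth macmahon_fps n"
    unfolding macmahon_fps_def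
    by (rule fps_exp_compose_nth_ge[OF log_macmahon_fps_nth_nonneg assms])
  then have "log_macmahon_coeff n \<le> macmahon_coeff n"
    by (simp add: log_macmahon_fps_def macmahon_coeff_def less_eq_complex_def)
  then show ?thesis
    using log_macmahon_coeff_ge[OF assms] assms by linarith
qed

lemma macmahon_sums:
  assumes "norm z < 1"
  shows "(\<lambda>n. of_real (macmahon_coeff n) * z ^ n) sums macmahon z"
proof -
  have "0 < fps_conv_radius log_macmahon_fps"
    using fps_conv_radius_log_macmahon by (rule less_le_trans[rotated]) simp
  then have "log_macmahon has_fps_expansion log_macmahon_fps"
    unfolding log_macmahon_def by (rule eval_fps_has_fps_expansion)
  then have expansion: "(exp \<circ> log_macmahon) has_fps_expansion macmahon_fps"
    unfolding macmahon_fps_def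
    by (rule has_fps_expansion_compose[OF has_fps_expansion_exp1]) (simp add: log_macmahon_fps_def)
  have "(exp \<circ> log_macmahon) holomorphic_on eball 0 1"
    unfolding o_def log_macmahon_def
    by (intro holomorphic_intros holomorphic_on_eval_fps)
       (use fps_conv_radius_log_macmahon eball_mono in blast)
  from has_fps_expansion_imp_sums_complex[OF expansion this] assms
  have "(\<lambda>n. fps_nth macmahon_fps n * z ^ n) sums (exp \<circ> log_macmahon) z"
    by simp
  then show ?thesis by (simp add: macmahon_fps_nth macmahon_eq_exp[OF assms])
qed

lemma conv_radius_macmahon_coeff: "conv_radius macmahon_coeff = 1"
proof (rule antisym)
  show "1 \<le> conv_radius macmahon_coeff"
  proof (rule conv_radius_geI_ex')
    fix r :: real assume "0 < r" "ereal r < 1"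
    then have "summable (\<lambda>n. of_real (macmahon_coeff n) * complex_of_real r ^ n)"
      using macmahon_sums[of "of_real r"] by (auto simp: sums_iff)
    then have "summable (\<lambda>n. complex_of_real (macmahon_coeff n * r ^ n))"
      by simp
    then show "summable (\<lambda>n. macmahon_coeff n * of_real r ^ n)"
      by (subst (asm) summable_of_real_iff) simp
  qed
  have "\<not> summable (\<lambda>n. macmahon_coeff n * 1 ^ n)"
  proof
    assume "summable (\<lambda>n. macmahon_coeff n * 1 ^ n)"
    then have "macmahon_coeff \<longlonglongrightarrow> 0"
      using summable_LIMSEQ_zero by force
    moreover have "\<exists>N. \<forall>n\<ge>N. 1 \<le> macmahon_coeff n"
      using macmahon_coeff_ge_1 by (intro exI[of _ 1]) auto
    ultimately have "1 \<le> (0::real)"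
      by (rule LIMSEQ_le_const)
    then show False by simp
  qed
  then show "conv_radius macmahon_coeff \<le> 1"
    using conv_radius_leI'[of macmahon_coeff 1] by (simp add: one_ereal_def)
qed

section \<open>Cumulants\<close>

text \<open>\<open>\<kappa> j t = (t d/dt)\<^sup>j log M(t)\<close>; for \<open>j \<ge> 1\<close> this is the \<open>j\<close>-th cumulant of \<open>X\<^sub>t\<close>.\<close>

definition macmahon_cumulant :: "nat \<Rightarrow> real \<Rightarrow> real" (\<open>\<kappa>\<close>) where
  "\<kappa> j t = (\<Sum>n. real n ^ j * log_macmahon_coeff n * t ^ n)"

lemma macmahon_cumulant_sums:
  "\<bar>t\<bar> < 1 \<Longrightarrow> (\<lambda>n. real n ^ j * log_macmahon_coeff n * t ^ n) sums \<kappa> j t"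
  unfolding macmahon_cumulant_def by (rule summable_sums[OF summable_log_macmahon_coeff_powser])

lemma macmahon_cumulant_nonneg: "0 \<le> t \<Longrightarrow> t < 1 \<Longrightarrow> 0 \<le> \<kappa> j t"
  unfolding macmahon_cumulant_def
  by (intro suminf_nonneg summable_log_macmahon_coeff_powser)
     (auto intro!: mult_nonneg_nonneg log_macmahon_coeff_nonneg)

lemma macmahon_cumulant_theta_derivative:
  assumes "\<bar>t\<bar> < 1"
  obtains D where "(\<kappa> j has_real_derivative D) (at t)" and "t * D = \<kappa> (Suc j) t"
proof -
  let ?b = "\<lambda>n. real n ^ j * log_macmahon_coeff n"
  from powser_theta_derivative[of 1 ?b, OF summable_log_macmahon_coeff_powser assms]
  obtain D where D: "((\<lambda>x. \<Sum>n. ?b n * x ^ n) has_real_derivative D) (at t)"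
    and sums: "(\<lambda>n. (real n * ?b n) * t ^ n) sums (t * D)" .
  have "\<kappa> j = (\<lambda>x. \<Sum>n. ?b n * x ^ n)"
    by (simp add: fun_eq_iff macmahon_cumulant_def)
  with D have "(\<kappa> j has_real_derivative D) (at t)"
    by simp
  moreover have "t * D = \<kappa> (Suc j) t"
    using sums macmahon_cumulant_sums[OF assms, of "Suc j"] by (simp add: sums_iff mult.assoc)
  ultimately show thesis
    by (rule that)
qed

lemma macmahon_coeff_powser_sums:
  assumes "\<bar>t\<bar> < 1"
  shows "(\<lambda>n. macmahon_coeff n * t ^ n) sums exp (\<kappa> 0 t)"
proof -
  have "(\<lambda>n. complex_of_real (log_macmahon_coeff n * t ^ n)) sums of_real (\<kappa> 0 t)"
    using sums_of_real[OF macmahon_cumulant_sums[OF assms, of 0]] by simp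
  moreover have "(\<lambda>n. complex_of_real (log_macmahon_coeff n * t ^ n)) sums log_macmahon (of_real t)"
    using log_macmahon_sums[of "of_real t"] assms by simp
  ultimately have "log_macmahon (of_real t) = of_real (\<kappa> 0 t)"
    using sums_unique2 by metis
  then have "(\<lambda>n. complex_of_real (macmahon_coeff n * t ^ n)) sums of_real (exp (\<kappa> 0 t))"
    using macmahon_sums[of "of_real t"] macmahon_eq_exp[of "of_real t"] assms
    by (simp add: exp_of_real)
  from sums_Re[OF this] show ?thesis by simp
qed

lemma ps_val_macmahon_coeff: "\<bar>t\<bar> < 1 \<Longrightarrow> ps_val macmahon_coeff t = exp (\<kappa> 0 t)"
  unfolding ps_val_def using macmahon_coeff_powser_sums sums_unique by metis

text \<open>Both moment identities come from applying \<open>t d/dt\<close> to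
  \<open>\<Sum> a\<^sub>n t\<^sup>n = exp (\<kappa> 0 t)\<close>.\<close>

lemma macmahon_first_moment:
  assumes "\<bar>t\<bar> < 1"
  shows "(\<lambda>n. (real n * macmahon_coeff n) * t ^ n) sums (exp (\<kappa> 0 t) * \<kappa> 1 t)"
proof -
  have "\<And>x. \<bar>x\<bar> < 1 \<Longrightarrow> summable (\<lambda>n. macmahon_coeff n * x ^ n)"
    using macmahon_coeff_powser_sums sums_summable by blast
  from powser_theta_derivative[OF this assms] obtain D
    where D: "((\<lambda>x. \<Sum>n. macmahon_coeff n * x ^ n) has_real_derivative D) (at t)"
      and sums: "(\<lambda>n. (real n * macmahon_coeff n) * t ^ n) sums (t * D)" .
  obtain D0 where D0: "(\<kappa> 0 has_real_derivative D0) (at t)" and "t * D0 = \<kappa> 1 t"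
    using macmahon_cumulant_theta_derivative[OF assms, where j = 0] unfolding One_nat_def .
  have "((\<lambda>x. \<Sum>n. macmahon_coeff n * x ^ n) has_real_derivative exp (\<kappa> 0 t) * D0) (at t)"
    by (rule has_field_derivative_transform_within_open[OF DERIV_fun_exp[OF D0], of "{-1<..<1}"])
       (use assms in \<open>auto intro!: sums_unique macmahon_coeff_powser_sums\<close>)
  then have "D = exp (\<kappa> 0 t) * D0"
    using D DERIV_unique by blast
  then have "t * D = exp (\<kappa> 0 t) * \<kappa> 1 t"
    using \<open>t * D0 = \<kappa> 1 t\<close> by (simp add: algebra_simps)
  then show ?thesis using sums by simp
qed

lemma macmahon_second_moment:
  assumes "\<bar>t\<bar> < 1"
  shows "(\<lambda>n. (real n * (real n * macmahon_coeff n)) * t ^ n) sums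
           (exp (\<kappa> 0 t) * (\<kappa> 1 t ^ 2 + \<kappa> 2 t))"
proof -
  have "\<And>x. \<bar>x\<bar> < 1 \<Longrightarrow> summable (\<lambda>n. (real n * macmahon_coeff n) * x ^ n)"
    using macmahon_first_moment sums_summable by blast
  from powser_theta_derivative[OF this assms] obtain D
    where D: "((\<lambda>x. \<Sum>n. (real n * macmahon_coeff n) * x ^ n) has_real_derivative D) (at t)"
      and sums: "(\<lambda>n. (real n * (real n * macmahon_coeff n)) * t ^ n) sums (t * D)" .
  obtain D0 where D0: "(\<kappa> 0 has_real_derivative D0) (at t)" and "t * D0 = \<kappa> 1 t"
    using macmahon_cumulant_theta_derivative[OF assms, where j = 0] unfolding One_nat_def .
  obtain D1 where D1: "(\<kappa> 1 has_real_derivative D1) (at t)" and "t * D1 = \<kappa> 2 t"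
    using macmahon_cumulant_theta_derivative[OF assms, where j = 1]
    unfolding One_nat_def numeral_2_eq_2 .
  have "((\<lambda>x. \<Sum>n. (real n * macmahon_coeff n) * x ^ n) has_real_derivative
          exp (\<kappa> 0 t) * D0 * \<kappa> 1 t + D1 * exp (\<kappa> 0 t)) (at t)"
    by (rule has_field_derivative_transform_within_open[OF DERIV_mult[OF DERIV_fun_exp[OF D0] D1],
          of "{-1<..<1}"])
       (use assms in \<open>auto intro!: sums_unique macmahon_first_moment[unfolded One_nat_def]\<close>)
  then have "D = exp (\<kappa> 0 t) * D0 * \<kappa> 1 t + D1 * exp (\<kappa> 0 t)"
    using D DERIV_unique by blast
  then have "t * D = exp (\<kappa> 0 t) * (t * D0) * \<kappa> 1 t + (t * D1) * exp (\<kappa> 0 t)"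
    by (simp add: algebra_simps)
  also have "\<dots> = exp (\<kappa> 0 t) * (\<kappa> 1 t ^ 2 + \<kappa> 2 t)"
    unfolding \<open>t * D0 = \<kappa> 1 t\<close> \<open>t * D1 = \<kappa> 2 t\<close> by (simp add: algebra_simps power2_eq_square)
  finally show ?thesis using sums by simp
qed

lemma khin_mean_macmahon:
  assumes "\<bar>t\<bar> < 1"
  shows "khin_mean macmahon_coeff t = \<kappa> 1 t"
proof -
  have "(\<lambda>n. (real n * macmahon_coeff n) * t ^ n / exp (\<kappa> 0 t)) sums
          (exp (\<kappa> 0 t) * \<kappa> 1 t / exp (\<kappa> 0 t))"
    by (intro sums_divide macmahon_first_moment assms)
  then have "(\<lambda>n. real n * (macmahon_coeff n * t ^ n / ps_val macmahon_coeff t)) sums \<kappa> 1 t"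
    by (simp add: ps_val_macmahon_coeff[OF assms] mult.assoc)
  then show ?thesis
    unfolding khin_mean_def by (simp add: sums_iff)
qed

lemma khin_var_macmahon:
  assumes "\<bar>t\<bar> < 1"
  shows "khin_var macmahon_coeff t = \<kappa> 2 t"
proof -
  define m where "m = \<kappa> 1 t"
  define F where "F = exp (\<kappa> 0 t)"
  have "F > 0" by (simp add: F_def)
  have s0: "(\<lambda>n. macmahon_coeff n * t ^ n) sums F"
    unfolding F_def by (rule macmahon_coeff_powser_sums[OF assms])
  have s1: "(\<lambda>n. (real n * macmahon_coeff n) * t ^ n) sums (F * m)"
    unfolding F_def m_def by (rule macmahon_first_moment[OF assms])
  have s2: "(\<lambda>n. (real n * (real n * macmahon_coeff n)) * t ^ n) sums (F * (m ^ 2 + \<kappa> 2 t))"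
    unfolding F_def m_def by (rule macmahon_second_moment[OF assms])
  have "(\<lambda>n. ((real n * (real n * macmahon_coeff n)) * t ^ n - 2 * m * ((real n * macmahon_coeff n) * t ^ n)
            + m ^ 2 * (macmahon_coeff n * t ^ n)) / F)
        sums ((F * (m ^ 2 + \<kappa> 2 t) - 2 * m * (F * m) + m ^ 2 * F) / F)"
    by (intro sums_divide sums_add sums_diff sums_mult s0 s1 s2)
  moreover have "(F * (m ^ 2 + \<kappa> 2 t) - 2 * m * (F * m) + m ^ 2 * F) / F = \<kappa> 2 t"
    using \<open>F > 0\<close> by (simp add: field_simps power2_eq_square)
  moreover have "((real n * (real n * macmahon_coeff n)) * t ^ n - 2 * m * ((real n * macmahon_coeff n) * t ^ n)
            + m ^ 2 * (macmahon_coeff n * t ^ n)) / F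
      = (real n - m)\<^sup>2 * (macmahon_coeff n * t ^ n / ps_val macmahon_coeff t)" for n
    using \<open>F > 0\<close>
    by (simp add: ps_val_macmahon_coeff[OF assms] F_def[symmetric] field_simps power2_eq_square)
  ultimately have "(\<lambda>n. (real n - m)\<^sup>2 * (macmahon_coeff n * t ^ n / ps_val macmahon_coeff t)) sums \<kappa> 2 t"
    by simp
  then show ?thesis
    unfolding khin_var_def khin_mean_macmahon[OF assms] m_def by (simp add: sums_iff)
qed

lemma macmahon_cumulant_2_ge:
  assumes "0 \<le> t" "t < 1"
  shows "(1 / (1 - t) ^ 4 - 1) / 64 \<le> \<kappa> 2 t"
proof -
  have "real ((n + 3) choose 3) * t ^ n \<le>
          64 * (real n ^ 2 * log_macmahon_coeff n * t ^ n) + (if n = 0 then 1 else 0)" for n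
  proof (cases "n = 0")
    case False
    have "(n + 3) choose 3 \<le> (n + 3) ^ 3"
      by (rule binomial_le_pow) simp
    also have "\<dots> \<le> (4 * n) ^ 3"
      using False by (intro power_mono) auto
    finally have "real ((n + 3) choose 3) \<le> real ((4 * n) ^ 3)"
      by (simp only: of_nat_le_iff)
    also have "\<dots> = 64 * real n ^ 3"
      by (simp add: power_mult_distrib)
    also have "\<dots> \<le> 64 * (real n ^ 2 * log_macmahon_coeff n)"
      using log_macmahon_coeff_ge[of n] False
      by (simp add: power3_eq_cube power2_eq_square mult_left_mono)
    finally show ?thesis
      using False assms by (simp add: mult_right_mono mult.assoc[symmetric])
  qed simp
  moreover have "(\<lambda>n. real ((n + 3) choose 3) * t ^ n) sums (1 / (1 - t) ^ 4)"
    using binomial_neg_power_sums[of t 3] assms by simp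
  moreover have "(\<lambda>n. 64 * (real n ^ 2 * log_macmahon_coeff n * t ^ n) + (if n = 0 then 1 else 0))
                   sums (64 * \<kappa> 2 t + 1)"
    using assms by (intro sums_add sums_mult macmahon_cumulant_sums sums_single[of 0 "\<lambda>_. 1::real", simplified]) simp
  ultimately have "1 / (1 - t) ^ 4 \<le> 64 * \<kappa> 2 t + 1"
    by (rule sums_le)
  then show ?thesis by simp
qed

lemma macmahon_cumulant_2_pos:
  assumes "0 < t" "t < 1"
  shows "0 < \<kappa> 2 t"
proof -
  have "(1 - t) ^ 4 < 1"
    using assms by (simp add: power_less_one_iff)
  then have "0 < (1 / (1 - t) ^ 4 - 1) / 64"
    using assms by (simp add: field_simps)
  also have "\<dots> \<le> \<kappa> 2 t"
    using assms by (intro macmahon_cumulant_2_ge) auto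
  finally show ?thesis .
qed

lemma macmahon_cumulant_3_le:
  assumes "0 \<le> t" "t < 1"
  shows "\<kappa> 3 t \<le> 512 / (1 - t) ^ 5"
proof -
  have "real n ^ 3 * log_macmahon_coeff n * t ^ n \<le> 512 * (real ((n + 4) choose 4) * t ^ n)" for n
  proof -
    have "real n ^ 3 * log_macmahon_coeff n \<le> real n ^ 3 * (2 * real n)"
      by (intro mult_left_mono log_macmahon_coeff_le) auto
    also have "\<dots> = 2 * real n ^ 4"
      by (simp add: power3_eq_cube power4_eq_xxxx)
    also have "real n ^ 4 \<le> (real n + 4) ^ 4"
      by (intro power_mono) auto
    also have "(real n + 4) ^ 4 = 256 * ((real n + 4) / 4) ^ 4"
      by (simp add: power_divide)
    also have "((real n + 4) / 4) ^ 4 \<le> real ((n + 4) choose 4)"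
      using binomial_ge_n_over_k_pow_k[of 4 "n + 4", where 'a = real] by simp
    finally have "real n ^ 3 * log_macmahon_coeff n \<le> 512 * real ((n + 4) choose 4)"
      by simp
    then show ?thesis
      using assms by (simp add: mult_right_mono mult.assoc[symmetric])
  qed
  moreover have "(\<lambda>n. real n ^ 3 * log_macmahon_coeff n * t ^ n) sums \<kappa> 3 t"
    using assms by (intro macmahon_cumulant_sums) simp
  moreover have "(\<lambda>n. 512 * (real ((n + 4) choose 4) * t ^ n)) sums (512 * (1 / (1 - t) ^ 5))"
    using binomial_neg_power_sums[of t 4] assms by (intro sums_mult) simp
  ultimately have "\<kappa> 3 t \<le> 512 * (1 / (1 - t) ^ 5)"
    by (rule sums_le)
  then show ?thesis by simp
qed

lemma macmahon_cumulant_ratio_tendsto: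
  "((\<lambda>t. \<kappa> 3 t / sqrt (\<kappa> 2 t) ^ 3) \<longlongrightarrow> 0) (at_left 1)"
proof (rule Lim_null_comparison)
  let ?L = "\<lambda>t::real. (1 / (1 - t) ^ 4 - 1) / 64" and ?U = "\<lambda>t::real. 512 / (1 - t) ^ 5"
  show "((\<lambda>t. ?U t / sqrt (?L t) ^ 3) \<longlongrightarrow> 0) (at_left 1)"
    by real_asymp
  have "eventually (\<lambda>t. 0 < t \<and> t < 1) (at_left (1::real))"
    by (intro eventually_at_leftI[of 0]) auto
  then show "\<forall>\<^sub>F t in at_left 1. norm (\<kappa> 3 t / sqrt (\<kappa> 2 t) ^ 3) \<le> ?U t / sqrt (?L t) ^ 3"
  proof eventually_elim
    case (elim t)
    then have "0 < ?L t"
      using macmahon_cumulant_2_pos[of t] by (simp add: field_simps power_less_one_iff)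
    have "norm (\<kappa> 3 t / sqrt (\<kappa> 2 t) ^ 3) = \<kappa> 3 t / sqrt (\<kappa> 2 t) ^ 3"
      unfolding real_norm_def
      by (rule abs_of_nonneg)
         (use elim macmahon_cumulant_nonneg[of t 3] macmahon_cumulant_nonneg[of t 2] in auto)
    also have "\<dots> \<le> ?U t / sqrt (?L t) ^ 3"
      using elim \<open>0 < ?L t\<close> macmahon_cumulant_nonneg[of t 3]
      by (intro frac_le power_mono real_sqrt_le_mono macmahon_cumulant_3_le macmahon_cumulant_2_ge) auto
    finally show ?case .
  qed
qed

lemma in_class_K_macmahon_coeff: "in_class_K macmahon_coeff"
  unfolding in_class_K_def
  using macmahon_coeff_nonneg macmahon_coeff_0 macmahon_coeff_ge_1[of 1] conv_radius_macmahon_coeff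
  by (auto intro!: exI[of _ 1])

section \<open>Laws of the normalized variables\<close>

definition khin_weight :: "(nat \<Rightarrow> real) \<Rightarrow> real \<Rightarrow> nat \<Rightarrow> real" where
  "khin_weight a t n = a n * t ^ n / ps_val a t"

definition khin_normalized :: "(nat \<Rightarrow> real) \<Rightarrow> real \<Rightarrow> nat \<Rightarrow> real" where
  "khin_normalized a t n = (real n - khin_mean a t) / sqrt (khin_var a t)"

definition khin_measure :: "(nat \<Rightarrow> real) \<Rightarrow> real \<Rightarrow> nat measure" where
  "khin_measure a t = density (count_space UNIV) (\<lambda>n. ennreal (khin_weight a t n))"

definition khin_law :: "(nat \<Rightarrow> real) \<Rightarrow> real \<Rightarrow> real measure" where
  "khin_law a t = distr (khin_measure a t) borel (khin_normalized a t)"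

lemma space_khin_measure [simp]: "space (khin_measure a t) = UNIV"
  by (simp add: khin_measure_def)

lemma sets_khin_measure [simp]: "sets (khin_measure a t) = UNIV"
  by (simp add: khin_measure_def)

lemma khin_normalized_measurable: "khin_normalized a t \<in> borel_measurable (khin_measure a t)"
  by (simp add: measurable_def)

lemma khin_weight_sums:
  assumes "in_class_K a" "0 \<le> t" "ereal t < conv_radius a"
  shows "khin_weight a t sums 1" and "0 \<le> khin_weight a t n"
proof -
  have summable: "summable (\<lambda>n. a n * t ^ n)"
    using assms by (intro summable_in_conv_radius) simp
  have "0 < ps_val a t"
    unfolding ps_val_def using assms
    by (intro suminf_pos2[OF summable, where i = 0]) (auto simp: in_class_K_def)
  then show "khin_weight a t sums 1"
    using sums_divide[OF summable_sums[OF summable], of "ps_val a t"]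
    unfolding khin_weight_def[abs_def] ps_val_def by simp
  show "0 \<le> khin_weight a t n"
    using \<open>0 < ps_val a t\<close> assms by (simp add: khin_weight_def in_class_K_def)
qed

lemma sums_integral_khin_measure:
  fixes f :: "nat \<Rightarrow> 'b::{banach, second_countable_topology}"
  assumes "in_class_K a" "0 \<le> t" "ereal t < conv_radius a" and "\<And>n. norm (f n) \<le> 1"
  shows "(\<lambda>n. khin_weight a t n *\<^sub>R f n) sums integral\<^sup>L (khin_measure a t) f"
proof -
  note weight = khin_weight_sums[OF assms(1-3)]
  have "integrable (count_space UNIV) (\<lambda>n. khin_weight a t n *\<^sub>R f n)"
  proof (subst integrable_count_space_nat_iff)
    show "summable (\<lambda>n. norm (khin_weight a t n *\<^sub>R f n))"
    proof (rule summable_comparison_test[OF _ sums_summable[OF weight(1)]])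
      show "\<exists>N. \<forall>n\<ge>N. norm (norm (khin_weight a t n *\<^sub>R f n)) \<le> khin_weight a t n"
        using weight(2) assms(4) by (auto intro!: mult_left_le)
    qed
  qed
  then have "(\<lambda>n. khin_weight a t n *\<^sub>R f n) sums
               integral\<^sup>L (count_space UNIV) (\<lambda>n. khin_weight a t n *\<^sub>R f n)"
    by (rule sums_integral_count_space_nat)
  moreover have "integral\<^sup>L (khin_measure a t) f =
                   integral\<^sup>L (count_space UNIV) (\<lambda>n. khin_weight a t n *\<^sub>R f n)"
    unfolding khin_measure_def by (rule integral_density) (use weight(2) in auto)
  ultimately show ?thesis by simp
qed

lemma real_distribution_khin_law:
  assumes "in_class_K a" "0 \<le> t" "ereal t < conv_radius a"
  shows "real_distribution (khin_law a t)"
proof -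
  note weight = khin_weight_sums[OF assms]
  have "prob_space (khin_measure a t)"
  proof (rule prob_spaceI)
    have "emeasure (khin_measure a t) (space (khin_measure a t)) =
            (\<integral>\<^sup>+ n. ennreal (khin_weight a t n) \<partial>count_space UNIV)"
      unfolding khin_measure_def by (simp add: emeasure_density)
    also have "\<dots> = (\<Sum>n. ennreal (khin_weight a t n))"
      by (rule nn_integral_count_space_nat)
    also have "\<dots> = ennreal 1"
      by (rule suminf_ennreal_eq[OF weight(2) weight(1)])
    finally show "emeasure (khin_measure a t) (space (khin_measure a t)) = 1"
      by simp
  qed
  then show ?thesis
    unfolding khin_law_def
    by (rule prob_space.real_distribution_distr[OF _ khin_normalized_measurable])
qed

lemma cdf_khin_law:
  assumes "in_class_K a" "0 \<le> t" "ereal t < conv_radius a"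
  shows "cdf (khin_law a t) x = khin_norm_cdf a t x"
proof -
  let ?A = "khin_normalized a t -` {..x}"
  have "cdf (khin_law a t) x = measure (khin_measure a t) ?A"
    unfolding cdf_def khin_law_def
    by (subst measure_distr) (auto simp: khin_normalized_measurable)
  also have "\<dots> = integral\<^sup>L (khin_measure a t) (indicator ?A)"
    by simp
  also have "\<dots> = (\<Sum>n. khin_weight a t n *\<^sub>R (indicator ?A n :: real))"
    by (rule sums_unique[OF sums_integral_khin_measure[OF assms]]) (simp add: indicator_def)
  also have "\<dots> = khin_norm_cdf a t x"
    unfolding khin_norm_cdf_def khin_normalized_def khin_weight_def
    by (intro suminf_cong) (auto simp: indicator_def)
  finally show ?thesis .
qed

lemma char_khin_law_sums:
  assumes "in_class_K a" "0 \<le> t" "ereal t < conv_radius a"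
  shows "(\<lambda>n. khin_weight a t n *\<^sub>R iexp (\<theta> * khin_normalized a t n)) sums char (khin_law a t) \<theta>"
proof -
  have "char (khin_law a t) \<theta> = integral\<^sup>L (khin_measure a t) (\<lambda>n. iexp (\<theta> * khin_normalized a t n))"
    unfolding char_def khin_law_def
    by (subst integral_distr) (auto simp: khin_normalized_measurable)
  then show ?thesis
    using sums_integral_khin_measure[OF assms, of "\<lambda>n. iexp (\<theta> * khin_normalized a t n)"]
    by (simp add: norm_exp_i_times)
qed

lemma cdf_std_normal_distribution: "cdf std_normal_distribution x = std_normal_cdf x"
proof -
  have "cdf std_normal_distribution x = integral\<^sup>L std_normal_distribution (indicator {..x})"
    by (simp add: cdf_def)
  also have "\<dots> = integral\<^sup>L lborel (\<lambda>y. std_normal_density y *\<^sub>R (indicator {..x} y :: real))"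
    by (rule integral_density) auto
  also have "\<dots> = std_normal_cdf x"
    unfolding std_normal_cdf_def set_lebesgue_integral_def by (simp add: mult.commute)
  finally show ?thesis .
qed

lemma isCont_cdf_std_normal_distribution: "isCont (cdf std_normal_distribution) x"
proof -
  have "AE y in lborel. ennreal (std_normal_density y) * indicator {x} y = 0"
    using AE_lborel_singleton[of x] by eventually_elim simp
  then have "measure std_normal_distribution {x} = 0"
    by (simp add: emeasure_density nn_integral_cong_AE measure_def)
  then show ?thesis
    using real_distribution.finite_borel_measure_M[OF real_dist_normal_dist]
    by (simp add: finite_borel_measure.isCont_cdf)
qed

text \<open>Levy's continuity theorem, with the limit \<open>t \<up> R\<close> taken along sequences.\<close>

lemma gaussian_if_char_tendsto:
  assumes K: "in_class_K a" and R: "conv_radius a = ereal R"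
    and char: "\<And>\<theta>. ((\<lambda>t. char (khin_law a t) \<theta>) \<longlongrightarrow> char std_normal_distribution \<theta>) (at_left R)"
  shows "gaussian a"
proof -
  have "0 < R"
    using K R by (simp add: in_class_K_def)
  have "((\<lambda>t. khin_norm_cdf a t x) \<longlongrightarrow> std_normal_cdf x) (at_left R)" for x
  proof (rule tendsto_at_left_sequentially[OF \<open>0 < R\<close>])
    fix S :: "nat \<Rightarrow> real"
    assume S: "\<And>n. S n < R" "\<And>n. 0 < S n" "incseq S" "S \<longlonglongrightarrow> R"
    have range: "0 \<le> S n" "ereal (S n) < conv_radius a" for n
      using S(1,2)[of n] R by auto
    have "filterlim S (at_left R) sequentially"
      by (rule tendsto_imp_filterlim_at_left[OF S(4)]) (use S(1) in auto)
    then have "(\<lambda>n. char (khin_law a (S n)) \<theta>) \<longlonglongrightarrow> char std_normal_distribution \<theta>" for \<theta>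
      by (rule filterlim_compose[OF char])
    then have "weak_conv_m (\<lambda>n. khin_law a (S n)) std_normal_distribution"
      by (intro levy_continuity real_distribution_khin_law[OF K range] real_dist_normal_dist)
    then have "(\<lambda>n. cdf (khin_law a (S n)) x) \<longlonglongrightarrow> cdf std_normal_distribution x"
      unfolding weak_conv_m_def weak_conv_def using isCont_cdf_std_normal_distribution by blast
    then show "(\<lambda>n. khin_norm_cdf a (S n) x) \<longlonglongrightarrow> std_normal_cdf x"
      by (simp add: cdf_khin_law[OF K range] cdf_std_normal_distribution)
  qed
  then show ?thesis
    using K R by (simp add: gaussian_def to_radius_def)
qed

section \<open>Asymptotic normality\<close>

lemma power_of_real_mult_iexp:
  "(complex_of_real r * iexp u) ^ n = of_real (r ^ n) * iexp (real n * u)"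
proof -
  have "\<i> * complex_of_real (real n * u) = of_nat n * (\<i> * of_real u)"
    by simp
  then show ?thesis
    by (simp only: exp_of_nat_mult power_mult_distrib of_real_power)
qed

definition macmahon_char_exponent :: "real \<Rightarrow> real \<Rightarrow> complex" where
  "macmahon_char_exponent t u =
     (\<Sum>n. of_real (log_macmahon_coeff n * t ^ n) * (iexp (real n * u) - 1 - \<i> * of_real (real n * u)))"

lemma macmahon_char_exponent_sums:
  assumes "\<bar>t\<bar> < 1"
  shows "(\<lambda>n. of_real (log_macmahon_coeff n * t ^ n) * (iexp (real n * u) - 1 - \<i> * of_real (real n * u)))
           sums (log_macmahon (of_real t * iexp u) - of_real (\<kappa> 0 t) - \<i> * of_real u * of_real (\<kappa> 1 t))"
proof -
  have "norm (of_real t * iexp u) < 1"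
    using assms by (simp add: norm_mult)
  from log_macmahon_sums[OF this]
  have "(\<lambda>n. of_real (log_macmahon_coeff n * t ^ n) * iexp (real n * u)) sums log_macmahon (of_real t * iexp u)"
    by (simp add: power_of_real_mult_iexp mult.assoc)
  moreover have "(\<lambda>n. complex_of_real (log_macmahon_coeff n * t ^ n)) sums of_real (\<kappa> 0 t)"
    using sums_of_real[OF macmahon_cumulant_sums[OF assms, of 0]] by simp
  moreover have "(\<lambda>n. (\<i> * of_real u) * complex_of_real (real n ^ 1 * log_macmahon_coeff n * t ^ n))
                   sums ((\<i> * of_real u) * of_real (\<kappa> 1 t))"
    by (intro sums_mult sums_of_real macmahon_cumulant_sums assms)
  ultimately have "(\<lambda>n. of_real (log_macmahon_coeff n * t ^ n) * iexp (real n * u)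
        - complex_of_real (log_macmahon_coeff n * t ^ n)
        - (\<i> * of_real u) * complex_of_real (real n ^ 1 * log_macmahon_coeff n * t ^ n))
      sums (log_macmahon (of_real t * iexp u) - of_real (\<kappa> 0 t) - (\<i> * of_real u) * of_real (\<kappa> 1 t))"
    by (intro sums_diff)
  then show ?thesis
    by (simp add: algebra_simps)
qed

text \<open>With \<open>u = \<theta> / \<sigma>\<close>, the characteristic function is
  \<open>M(t e\<^sup>i\<^sup>u) / M(t) \<cdot> e\<^sup>-\<^sup>i\<^sup>u\<^sup>\<kappa>\<^sup>1\<close>; \<open>W\<close> collects the last two factors.\<close>

lemma char_khin_law_macmahon:
  assumes "0 \<le> t" "t < 1"
  shows "char (khin_law macmahon_coeff t) \<theta> = exp (macmahon_char_exponent t (\<theta> / sqrt (\<kappa> 2 t)))"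
proof -
  define u where "u = \<theta> / sqrt (\<kappa> 2 t)"
  define z where "z = complex_of_real t * iexp u"
  define W where "W = exp (- (\<i> * of_real u * of_real (\<kappa> 1 t))) / of_real (exp (\<kappa> 0 t))"
  have t: "\<bar>t\<bar> < 1"
    using assms by simp
  have z: "norm z < 1"
    using assms by (simp add: z_def norm_mult)
  have range: "ereal t < conv_radius macmahon_coeff"
    using assms by (simp add: conv_radius_macmahon_coeff)
  have "khin_weight macmahon_coeff t n *\<^sub>R iexp (\<theta> * khin_normalized macmahon_coeff t n) =
          of_real (macmahon_coeff n) * z ^ n * W" for n
  proof -
    have "\<theta> * khin_normalized macmahon_coeff t n = real n * u - \<kappa> 1 t * u"
      unfolding khin_normalized_def khin_mean_macmahon[OF t] khin_var_macmahon[OF t] u_def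
      by (simp add: right_diff_distrib diff_divide_distrib mult.commute)
    then have "iexp (\<theta> * khin_normalized macmahon_coeff t n) =
                 iexp (real n * u) * exp (- (\<i> * of_real u * of_real (\<kappa> 1 t)))"
      by (simp only:) (simp add: algebra_simps flip: exp_add)
    moreover have "khin_weight macmahon_coeff t n = macmahon_coeff n * t ^ n / exp (\<kappa> 0 t)"
      by (simp add: khin_weight_def ps_val_macmahon_coeff[OF t])
    ultimately show ?thesis
      by (simp add: z_def power_of_real_mult_iexp W_def scaleR_conv_of_real)
  qed
  then have "(\<lambda>n. of_real (macmahon_coeff n) * z ^ n * W) sums char (khin_law macmahon_coeff t) \<theta>"
    using char_khin_law_sums[OF in_class_K_macmahon_coeff assms(1) range, of \<theta>] by simp
  moreover have "(\<lambda>n. of_real (macmahon_coeff n) * z ^ n * W) sums (macmahon z * W)"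
    by (rule sums_mult2[OF macmahon_sums[OF z]])
  ultimately have "char (khin_law macmahon_coeff t) \<theta> = macmahon z * W"
    using sums_unique2 by blast
  also have "\<dots> = exp (log_macmahon z - of_real (\<kappa> 0 t) - \<i> * of_real u * of_real (\<kappa> 1 t))"
    by (simp add: macmahon_eq_exp[OF z] W_def exp_diff exp_of_real[symmetric] exp_minus exp_add
        field_simps)
  also have "log_macmahon z - of_real (\<kappa> 0 t) - \<i> * of_real u * of_real (\<kappa> 1 t) =
               macmahon_char_exponent t u"
    using macmahon_char_exponent_sums[OF t, of u]
    unfolding z_def macmahon_char_exponent_def by (simp add: sums_iff)
  finally show ?thesis
    by (simp add: u_def)
qed

lemma iexp_cubic_approx:
  "norm (iexp x - (1 + \<i> * of_real x - of_real (x ^ 2 / 2))) \<le> \<bar>x\<bar> ^ 3 / 6"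
proof -
  have "(\<Sum>k\<le>2. (\<i> * complex_of_real x) ^ k / fact k) = 1 + \<i> * x - x ^ 2 / 2"
    by (simp add: numeral_2_eq_2 power2_eq_square algebra_simps)
  moreover have "fact (Suc 2) = (6::real)"
    by (simp add: numeral_eq_Suc)
  ultimately show ?thesis
    using iexp_approx1[of x 2] by (simp add: numeral_eq_Suc)
qed

lemma macmahon_char_exponent_approx:
  assumes "0 \<le> t" "t < 1"
  shows "norm (macmahon_char_exponent t u + of_real (u ^ 2 / 2 * \<kappa> 2 t)) \<le> \<bar>u\<bar> ^ 3 / 6 * \<kappa> 3 t"
proof -
  let ?T = "\<lambda>n. of_real (log_macmahon_coeff n * t ^ n) * (iexp (real n * u) - 1 - \<i> * of_real (real n * u))"
  let ?Q = "\<lambda>n. complex_of_real (u ^ 2 / 2 * (real n ^ 2 * log_macmahon_coeff n * t ^ n))"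
  have t: "\<bar>t\<bar> < 1"
    using assms by simp
  have "?T sums macmahon_char_exponent t u"
    using macmahon_char_exponent_sums[OF t, of u] unfolding macmahon_char_exponent_def
    by (simp add: sums_iff)
  moreover have "?Q sums complex_of_real (u ^ 2 / 2 * \<kappa> 2 t)"
    by (intro sums_of_real sums_mult macmahon_cumulant_sums t)
  ultimately have sums: "(\<lambda>n. ?T n + ?Q n) sums
                           (macmahon_char_exponent t u + complex_of_real (u ^ 2 / 2 * \<kappa> 2 t))"
    by (rule sums_add)
  have cubic: "(\<lambda>n. \<bar>u\<bar> ^ 3 / 6 * (real n ^ 3 * log_macmahon_coeff n * t ^ n)) sums (\<bar>u\<bar> ^ 3 / 6 * \<kappa> 3 t)"
    by (intro sums_mult macmahon_cumulant_sums t)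
  have "norm (?T n + ?Q n) \<le> \<bar>u\<bar> ^ 3 / 6 * (real n ^ 3 * log_macmahon_coeff n * t ^ n)" for n
  proof -
    let ?c = "log_macmahon_coeff n * t ^ n"
    have "0 \<le> ?c"
      using log_macmahon_coeff_nonneg[of n] assms by simp
    have "?T n + ?Q n = of_real ?c * (iexp (real n * u) -
            (1 + \<i> * of_real (real n * u) - of_real ((real n * u) ^ 2 / 2)))"
      by (simp add: algebra_simps power2_eq_square)
    also have "norm \<dots> = ?c * norm (iexp (real n * u) -
            (1 + \<i> * of_real (real n * u) - of_real ((real n * u) ^ 2 / 2)))"
      using \<open>0 \<le> ?c\<close> by (simp only: norm_mult norm_of_real abs_of_nonneg)
    also have "\<dots> \<le> ?c * (\<bar>real n * u\<bar> ^ 3 / 6)"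
      using \<open>0 \<le> ?c\<close> by (intro mult_left_mono iexp_cubic_approx)
    also have "\<dots> = \<bar>u\<bar> ^ 3 / 6 * (real n ^ 3 * log_macmahon_coeff n * t ^ n)"
      by (simp add: abs_mult power_mult_distrib)
    finally show ?thesis .
  qed
  then have "norm (\<Sum>n. ?T n + ?Q n) \<le> (\<Sum>n. \<bar>u\<bar> ^ 3 / 6 * (real n ^ 3 * log_macmahon_coeff n * t ^ n))"
    by (rule norm_suminf_le) (rule sums_summable[OF cubic])
  then show ?thesis
    using sums cubic by (simp add: sums_iff)
qed

lemma char_khin_law_macmahon_tendsto:
  "((\<lambda>t. char (khin_law macmahon_coeff t) \<theta>) \<longlongrightarrow> char std_normal_distribution \<theta>) (at_left 1)"
proof -
  let ?E = "\<lambda>t. macmahon_char_exponent t (\<theta> / sqrt (\<kappa> 2 t))"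
  have ev: "eventually (\<lambda>t. 0 < t \<and> t < 1) (at_left (1::real))"
    by (intro eventually_at_leftI[of 0]) auto
  have "((\<lambda>t. ?E t + of_real (\<theta> ^ 2 / 2)) \<longlongrightarrow> 0) (at_left 1)"
  proof (rule Lim_null_comparison)
    show "\<forall>\<^sub>F t in at_left 1. norm (?E t + of_real (\<theta> ^ 2 / 2)) \<le>
            \<bar>\<theta>\<bar> ^ 3 / 6 * (\<kappa> 3 t / sqrt (\<kappa> 2 t) ^ 3)"
      using ev
    proof eventually_elim
      case (elim t)
      then have "0 < \<kappa> 2 t"
        by (intro macmahon_cumulant_2_pos) auto
      then have "(\<theta> / sqrt (\<kappa> 2 t)) ^ 2 / 2 * \<kappa> 2 t = \<theta> ^ 2 / 2"
        and "\<bar>\<theta> / sqrt (\<kappa> 2 t)\<bar> ^ 3 / 6 * \<kappa> 3 t = \<bar>\<theta>\<bar> ^ 3 / 6 * (\<kappa> 3 t / sqrt (\<kappa> 2 t) ^ 3)"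
        by (simp_all add: power_divide abs_div)
      moreover have "norm (?E t + of_real ((\<theta> / sqrt (\<kappa> 2 t)) ^ 2 / 2 * \<kappa> 2 t)) \<le>
                       \<bar>\<theta> / sqrt (\<kappa> 2 t)\<bar> ^ 3 / 6 * \<kappa> 3 t"
        using elim by (intro macmahon_char_exponent_approx) auto
      ultimately show ?case
        by (simp only:)
    qed
    show "((\<lambda>t. \<bar>\<theta>\<bar> ^ 3 / 6 * (\<kappa> 3 t / sqrt (\<kappa> 2 t) ^ 3)) \<longlongrightarrow> 0) (at_left 1)"
      by (rule tendsto_mult_right_zero[OF macmahon_cumulant_ratio_tendsto])
  qed
  then have "((\<lambda>t. (?E t + of_real (\<theta> ^ 2 / 2)) - of_real (\<theta> ^ 2 / 2)) \<longlongrightarrow>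
               0 - of_real (\<theta> ^ 2 / 2)) (at_left 1)"
    by (intro tendsto_diff tendsto_const)
  then have "((\<lambda>t. exp (?E t)) \<longlongrightarrow> exp (- of_real (\<theta> ^ 2 / 2))) (at_left 1)"
    by (intro tendsto_exp) simp
  also have "exp (- of_real (\<theta> ^ 2 / 2)) = char std_normal_distribution \<theta>"
    by (simp add: char_std_normal_distribution exp_of_real[symmetric])
  finally have lim: "((\<lambda>t. exp (?E t)) \<longlongrightarrow> char std_normal_distribution \<theta>) (at_left 1)" .
  have "eventually (\<lambda>t. exp (?E t) = char (khin_law macmahon_coeff t) \<theta>) (at_left 1)"
    using ev by eventually_elim (simp add: char_khin_law_macmahon)
  from tendsto_cong[OF this] lim show ?thesis
    by simp
qed

theorem mainTheorem10:
  shows "\<exists>a :: nat \<Rightarrow> real.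
           (\<forall>z::complex. norm z < 1 \<longrightarrow>
              (\<lambda>j. inverse ((1 - z ^ Suc j) ^ Suc j)) has_prod macmahon z \<and>
              (\<lambda>n. complex_of_real (a n) * z ^ n) sums macmahon z)
         \<and> in_class_K a \<and> conv_radius a = 1 \<and> gaussian a"
proof (intro exI[of _ macmahon_coeff] conjI allI impI)
  fix z :: complex
  assume z: "norm z < 1"
  show "(\<lambda>j. inverse ((1 - z ^ Suc j) ^ Suc j)) has_prod macmahon z"
    using macmahon_has_prod[OF z] macmahon_eq_exp[OF z] by simp
  show "(\<lambda>n. complex_of_real (macmahon_coeff n) * z ^ n) sums macmahon z"
    by (rule macmahon_sums[OF z])
next
  show "in_class_K macmahon_coeff"
    by (rule in_class_K_macmahon_coeff)
  show "conv_radius macmahon_coeff = 1"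
    by (rule conv_radius_macmahon_coeff)
  show "gaussian macmahon_coeff"
    using conv_radius_macmahon_coeff char_khin_law_macmahon_tendsto
    by (intro gaussian_if_char_tendsto[OF in_class_K_macmahon_coeff, of 1]) (simp_all add: one_ereal_def)
qed

end
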